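(* Fix $\varepsilon>0$ and $C>0$. There are constants $c_1,c_2>0$ (depending on $\varepsilon$ and $C$) and $n_0$ such that for all $n\ge n_0$ and all integers $2\le k\le Cn^{1/2-\varepsilon}$ there exist a length $m$ and a sequence $S\in[n]^m$ with $\mathit{WS}(S)\le c_1 m\log_2 k$ and ${\mathit LF}^k(S)\ge c_2 m\log_2(n/k)$.
   Context: Working set bound: for $S=(s_1,\dots,s_m)$ and $j\le m$, let $\rho(j)=\max\{i<j:s_i=s_j\}$, with $\rho(j)=0$ if there is no such $i$, and let $w_S(j)=\{s_i:\rho(j)<i\le j\}$. Then $\mathit{WS}(S)=\sum_{j=1}^m\log_2|w_S(j)|$. For a BST $T$, $d_T(a,b)$ is the number of edges on the path between $a$ and $b$. $k$-lazy finger bound: for a BST $T$ on $[n]$, a finger strategy consists of initial positions $\vec\ell\in[n]^k$ and assignments $\vec f\in[k]^m$, where finger $f_t$ serves $s_t$ and then sits at $s_t$. The cost is $\sum_t(1+d_T(s_t,\sigma(f_t,t)))$, where $\sigma(i,t)$ is the position of finger $i$ just before time $t$. ${\mathit LF}^k_T(S)$ is the minimum over strategies, and ${\mathit LF}^k(S)=\min_T{\mathit LF}^k_T(S)$ over BSTs $T$ on $[n]$. *)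

theory Defs
  imports Complex_Main "HOL-Library.Tree"
begin

text \<open>Sequences S = (s_1,...,s_m) are functions s :: nat => nat read on indices 1..m.
  The key set is [n] = {1..n}.\<close>

definition seq_in :: "nat \<Rightarrow> nat \<Rightarrow> (nat \<Rightarrow> nat) \<Rightarrow> bool" where
  "seq_in n m s \<longleftrightarrow> (\<forall>i\<in>{1..m}. s i \<in> {1..n})"

definition prev_occ :: "(nat \<Rightarrow> nat) \<Rightarrow> nat \<Rightarrow> nat" where
  "prev_occ s j = (if \<exists>i\<in>{1..<j}. s i = s j then Max {i\<in>{1..<j}. s i = s j} else 0)"

definition wset :: "(nat \<Rightarrow> nat) \<Rightarrow> nat \<Rightarrow> nat set" where
  "wset s j = {s i | i. prev_occ s j < i \<and> i \<le> j}"

definition WS :: "nat \<Rightarrow> (nat \<Rightarrow> nat) \<Rightarrow> real" where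
  "WS m s = (\<Sum>j=1..m. log 2 (real (card (wset s j))))"

definition bst_on :: "nat \<Rightarrow> nat tree \<Rightarrow> bool" where
  "bst_on n t \<longleftrightarrow> inorder t = [1..<n+1]"

fun tpath :: "nat tree \<Rightarrow> nat \<Rightarrow> nat list" where
  "tpath Leaf x = []"
| "tpath (Node l a r) x =
     (if x = a then [a] else if x < a then a # tpath l x else a # tpath r x)"

fun lcp_len :: "nat list \<Rightarrow> nat list \<Rightarrow> nat" where
  "lcp_len (x # xs) (y # ys) = (if x = y then Suc (lcp_len xs ys) else 0)"
| "lcp_len _ _ = 0"

text \<open>d_T(a,b): number of edges on the tree path between a and b
  (depth a + depth b - 2 depth(lca a b), computed via root paths).\<close>
definition tdist :: "nat tree \<Rightarrow> nat \<Rightarrow> nat \<Rightarrow> nat" where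
  "tdist t a b = length (tpath t a) + length (tpath t b) - 2 * lcp_len (tpath t a) (tpath t b)"

text \<open>Position of finger i just before time t, given initial positions ell and
  assignment f (finger f t serves s t and then sits at s t).\<close>
definition finger_pos :: "(nat \<Rightarrow> nat) \<Rightarrow> (nat \<Rightarrow> nat) \<Rightarrow> (nat \<Rightarrow> nat) \<Rightarrow> nat \<Rightarrow> nat \<Rightarrow> nat" where
  "finger_pos s ell f i t =
     (if \<exists>t'\<in>{1..<t}. f t' = i then s (Max {t'\<in>{1..<t}. f t' = i}) else ell i)"

definition finger_cost :: "nat tree \<Rightarrow> nat \<Rightarrow> (nat \<Rightarrow> nat) \<Rightarrow> (nat \<Rightarrow> nat) \<Rightarrow> (nat \<Rightarrow> nat) \<Rightarrow> nat" where
  "finger_cost t m s ell f = (\<Sum>j=1..m. 1 + tdist t (s j) (finger_pos s ell f (f j) j))"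

definition LF_T :: "nat \<Rightarrow> nat \<Rightarrow> nat tree \<Rightarrow> nat \<Rightarrow> (nat \<Rightarrow> nat) \<Rightarrow> nat" where
  "LF_T n k t m s = Inf {finger_cost t m s ell f | ell f.
      (\<forall>i\<in>{1..k}. ell i \<in> {1..n}) \<and> (\<forall>j\<in>{1..m}. f j \<in> {1..k})}"

definition LF :: "nat \<Rightarrow> nat \<Rightarrow> nat \<Rightarrow> (nat \<Rightarrow> nat) \<Rightarrow> nat" where
  "LF n k m s = Inf {LF_T n k t m s | t. bst_on n t}"

end

theory Submission
  imports Defs "HOL-Real_Asymp.Real_Asymp"
begin

text \<open>Take \<open>K = 2k\<close> and let block \<open>b\<close> of the sequence repeat the \<open>b\<close>-th \<open>K\<close>-tuple of
  keys \<open>n\<close> times, for every tuple in \<open>[n]^K\<close>. After the first round of a block every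
  working set has at most \<open>K\<close> elements, so \<open>WS = O(m log k)\<close>. In a BST a ball of radius
  \<open>D\<close> contains at most \<open>(D + 1) 2^(D+1)\<close> keys, so when \<open>K^2 (D + 1) 2^(D+1) \<le> n/2\<close> at
  least half of the tuples have pairwise distances exceeding \<open>D\<close>. While such a tuple is
  repeated, \<open>k\<close> fingers cannot sit on all \<open>2k\<close> of its keys, so each round costs at least
  \<open>k (D + 1)\<close>. The assumption \<open>k \<le> C n^(1/2 - \<epsilon>)\<close> allows \<open>D \<approx> \<epsilon> log n\<close>, giving
  \<open>LF = \<Omega>(m log n)\<close>.\<close>

lemma bst_on_imp_bst: "bst_on n t \<Longrightarrow> bst t"
  unfolding bst_on_def bst_iff_sorted_wrt_less by (metis sorted_wrt_upt)

lemma set_tree_bst_on: "bst_on n t \<Longrightarrow> set_tree t = {1..n}"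
  unfolding bst_on_def by (metis atLeastLessThanSuc_atLeastAtMost set_inorder set_upt Suc_eq_plus1)

lemma bst_on_exists: "\<exists>t. bst_on n t"
proof -
  have "inorder (foldr (\<lambda>x t. Node Leaf x t) xs Leaf) = xs" for xs :: "nat list"
    by (induction xs) auto
  then show ?thesis unfolding bst_on_def by blast
qed

lemma lcp_len_commute: "lcp_len xs ys = lcp_len ys xs"
  by (induction xs ys rule: lcp_len.induct) auto

lemma lcp_len_le_length: "lcp_len xs ys \<le> length xs" "lcp_len xs ys \<le> length ys"
  by (induction xs ys rule: lcp_len.induct) auto

lemma take_lcp_len: "take (lcp_len xs ys) xs = take (lcp_len xs ys) ys"
  by (induction xs ys rule: lcp_len.induct) auto

lemma tdist_commute: "tdist t a b = tdist t b a"
  unfolding tdist_def by (simp add: lcp_len_commute)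

lemma hd_tpath_in_set_tree: "y \<in> set_tree t \<Longrightarrow> hd (tpath t y) \<in> set_tree t"
  by (cases t) auto

lemma card_depth_le:
  assumes "bst t"
  shows "card {y \<in> set_tree t. length (tpath t y) \<le> j} \<le> 2^j - 1"
  using assms
proof (induction t arbitrary: j)
  case Leaf
  then show ?case by simp
next
  case (Node l a r)
  let ?S = "\<lambda>t i. {y \<in> set_tree t. length (tpath t y) \<le> i}"
  show ?case
  proof (cases j)
    case 0
    have "tpath (Node l a r) y \<noteq> []" for y by simp
    then have "?S (Node l a r) j = {}" using 0 by (auto simp del: tpath.simps)
    then show ?thesis by (metis card.empty zero_le)
  next
    case (Suc i)
    have "?S (Node l a r) j \<subseteq> insert a (?S l i \<union> ?S r i)"
      using Node.prems Suc by (auto split: if_splits)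
    then have "card (?S (Node l a r) j) \<le> card (insert a (?S l i \<union> ?S r i))"
      by (intro card_mono) auto
    also have "\<dots> \<le> Suc (card (?S l i \<union> ?S r i))"
      by (simp add: card_insert_if)
    also have "\<dots> \<le> Suc (card (?S l i) + card (?S r i))"
      using card_Un_le by simp
    also have "\<dots> \<le> Suc ((2^i - 1) + (2^i - 1))"
      using Node.prems Node.IH[of i] by (simp add: add_mono)
    also have "\<dots> \<le> 2^j - 1"
      using Suc by (cases "(2::nat)^i") simp_all
    finally show ?thesis .
  qed
qed

lemma card_path_extensions_le:
  assumes "bst t" and "p \<noteq> []"
  shows "card {y \<in> set_tree t. \<exists>q. tpath t y = p @ q \<and> length q \<le> j} \<le> 2^(j+1) - 1"
  using assms
proof (induction t arbitrary: p)
  case Leaf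
  then show ?case by simp
next
  case (Node l a r)
  obtain b p' where p: "p = b # p'" using Node.prems by (cases p) auto
  have lt: "\<forall>x\<in>set_tree l. x < a" and gt: "\<forall>x\<in>set_tree r. a < x"
    using Node.prems by auto
  let ?S = "\<lambda>t p. {y \<in> set_tree t. \<exists>q. tpath t y = p @ q \<and> length q \<le> j}"
  consider "b \<noteq> a" | "b = a" "p' = []" | "b = a" "p' \<noteq> []" by blast
  then show ?case
  proof cases
    case 1
    with p have "?S (Node l a r) p = {}" by (auto split: if_splits)
    then show ?thesis by (metis card.empty zero_le)
  next
    case 2
    then have "?S (Node l a r) p \<subseteq> {y \<in> set_tree (Node l a r). length (tpath (Node l a r) y) \<le> j+1}"
      using p by auto
    then have "card (?S (Node l a r) p)
        \<le> card {y \<in> set_tree (Node l a r). length (tpath (Node l a r) y) \<le> j+1}"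
      by (intro card_mono) simp_all
    also have "\<dots> \<le> 2^(j+1) - 1"
      using Node.prems(1) by (rule card_depth_le)
    finally show ?thesis .
  next
    case 3
    have one_side: "?S l p' = {} \<or> ?S r p' = {}"
    proof (rule ccontr)
      assume "\<not> (?S l p' = {} \<or> ?S r p' = {})"
      then obtain y1 y2 q1 q2 where y1: "y1 \<in> set_tree l" "tpath l y1 = p' @ q1"
        and y2: "y2 \<in> set_tree r" "tpath r y2 = p' @ q2" by blast
      have "hd p' \<in> set_tree l" "hd p' \<in> set_tree r"
        using hd_tpath_in_set_tree[OF y1(1)] hd_tpath_in_set_tree[OF y2(1)] y1 y2 3 by auto
      then show False using lt gt by (meson less_asym)
    qed
    have "?S (Node l a r) p \<subseteq> ?S l p' \<union> ?S r p'"
      using p 3 lt gt by (auto split: if_splits)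
    then have "card (?S (Node l a r) p) \<le> card (?S l p' \<union> ?S r p')"
      by (intro card_mono) auto
    also have "\<dots> \<le> 2^(j+1) - 1"
    proof -
      have "bst l" "bst r" using Node.prems(1) by auto
      then have "card (?S l p') \<le> 2^(j+1) - 1" "card (?S r p') \<le> 2^(j+1) - 1"
        using Node.IH 3(2) by blast+
      with one_side show ?thesis by (elim disjE) (simp_all only: Un_empty_left Un_empty_right)
    qed
    finally show ?thesis .
  qed
qed

text \<open>A node within distance \<open>d\<close> of \<open>x\<close> extends a prefix of the root path of \<open>x\<close>
  of length at least \<open>|path x| - d\<close> by at most \<open>d\<close> steps.\<close>
lemma card_tdist_ball_le:
  assumes "bst t"
  shows "card {y \<in> set_tree t. tdist t x y \<le> d} \<le> (d+1) * 2^(d+1)"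
proof -
  define px where "px = tpath t x"
  define S where "S p = {y \<in> set_tree t. \<exists>q. tpath t y = p @ q \<and> length q \<le> d}" for p
  have card_S: "card (S p) \<le> 2^(d+1)" for p
  proof (cases "p = []")
    case True
    then have "S p = {y \<in> set_tree t. length (tpath t y) \<le> d}" unfolding S_def by auto
    then show ?thesis using card_depth_le[OF assms, of d] by simp
  next
    case False
    then show ?thesis using card_path_extensions_le[OF assms False, of d] unfolding S_def by simp
  qed
  have ball_sub: "{y \<in> set_tree t. tdist t x y \<le> d} \<subseteq> (\<Union>l\<in>{length px - d..length px}. S (take l px))"
  proof
    fix y assume y: "y \<in> {y \<in> set_tree t. tdist t x y \<le> d}"
    define py where "py = tpath t y"
    define l where "l = lcp_len px py"
    have l_le: "l \<le> length px" "l \<le> length py" unfolding l_def by (rule lcp_len_le_length)+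
    have dist: "length px + length py - 2 * l \<le> d"
      using y unfolding tdist_def px_def py_def l_def by simp
    have "take l px = take l py" unfolding l_def by (rule take_lcp_len)
    then have "py = take l px @ drop l py" by simp
    moreover have "length (drop l py) \<le> d" using dist l_le by simp
    ultimately have "y \<in> S (take l px)" using y unfolding S_def py_def by blast
    moreover have "l \<in> {length px - d..length px}" using dist l_le by auto
    ultimately show "y \<in> (\<Union>l\<in>{length px - d..length px}. S (take l px))" by blast
  qed
  have "card {y \<in> set_tree t. tdist t x y \<le> d} \<le> card (\<Union>l\<in>{length px - d..length px}. S (take l px))"
    by (intro card_mono[OF _ ball_sub]) (simp add: S_def)
  also have "\<dots> \<le> (\<Sum>l\<in>{length px - d..length px}. card (S (take l px)))"
    by (rule card_UN_le) simp
  also have "\<dots> \<le> card {length px - d..length px} * 2^(d+1)"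
    by (rule sum_bounded_above[of _ "\<lambda>l. card (S (take l px))", simplified]) (rule card_S)
  also have "\<dots> \<le> (d+1) * 2^(d+1)" by (intro mult_le_mono1) simp
  finally show ?thesis .
qed

definition separated :: "nat \<Rightarrow> nat tree \<Rightarrow> nat list \<Rightarrow> bool" where
  "separated D t u \<longleftrightarrow> (\<forall>p<length u. \<forall>q<length u. p \<noteq> q \<longrightarrow> D < tdist t (u!p) (u!q))"

lemma not_separated_Cons:
  "\<not> separated D t (x # u) \<longleftrightarrow> \<not> separated D t u \<or> (\<exists>j<length u. tdist t x (u!j) \<le> D)"
  unfolding separated_def by (auto simp: All_less_Suc2 not_less tdist_commute)

text \<open>A non-separated tuple \<open>x # u\<close> has a non-separated tail \<open>u\<close>, or \<open>x\<close> lies in the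
  \<open>D\<close>-ball of one of the \<open>K\<close> entries of \<open>u\<close>.\<close>
lemma card_unseparated_tuples_Suc_le:
  fixes A :: "nat set"
  assumes "finite A" and ball: "\<And>y. y \<in> A \<Longrightarrow> card {x\<in>A. tdist t x y \<le> D} \<le> B"
  shows "card {u. set u \<subseteq> A \<and> length u = Suc K \<and> \<not> separated D t u}
    \<le> card A * card {u. set u \<subseteq> A \<and> length u = K \<and> \<not> separated D t u} + card A ^ K * (K * B)"
proof -
  define T where "T = {u. set u \<subseteq> A \<and> length u = K}"
  define Bad where "Bad K' = {u. set u \<subseteq> A \<and> length u = K' \<and> \<not> separated D t u}" for K'
  define Near where "Near u = (\<Union>j<K. {x\<in>A. tdist t x (u!j) \<le> D})" for u
  have fin_T: "finite T" unfolding T_def using \<open>finite A\<close> by (simp add: finite_lists_length_eq)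
  have fin_Bad: "finite (Bad K)" by (rule finite_subset[OF _ fin_T]) (auto simp: Bad_def T_def)
  have fin_Near: "finite (Near u)" for u unfolding Near_def using \<open>finite A\<close> by simp
  have "Bad (Suc K) \<subseteq> ((\<lambda>(x, u). x # u) ` (A \<times> Bad K)) \<union> ((\<lambda>(u, x). x # u) ` Sigma T Near)"
  proof
    fix v assume "v \<in> Bad (Suc K)"
    then obtain x u where "v = x # u" "x \<in> A" "u \<in> T" "\<not> separated D t (x # u)"
      unfolding Bad_def T_def by (cases v) auto
    then show "v \<in> ((\<lambda>(x, u). x # u) ` (A \<times> Bad K)) \<union> ((\<lambda>(u, x). x # u) ` Sigma T Near)"
      unfolding not_separated_Cons Bad_def T_def Near_def by auto
  qed
  then have "card (Bad (Suc K))
      \<le> card ((\<lambda>(x, u). x # u) ` (A \<times> Bad K) \<union> (\<lambda>(u, x). x # u) ` Sigma T Near)"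
    by (rule card_mono[rotated]) (use \<open>finite A\<close> fin_Bad fin_T fin_Near in auto)
  also have "\<dots> \<le> card (A \<times> Bad K) + card (Sigma T Near)"
    by (rule order_trans[OF card_Un_le add_mono[OF card_image_le card_image_le]])
      (use \<open>finite A\<close> fin_Bad fin_T fin_Near in auto)
  also have "\<dots> \<le> card A * card (Bad K) + card A ^ K * (K * B)"
  proof -
    have "card (Near u) \<le> K * B" if "u \<in> T" for u
    proof -
      have "u!j \<in> A" if "j < K" for j using \<open>u \<in> T\<close> that unfolding T_def by auto
      then have "(\<Sum>j<K. card {x\<in>A. tdist t x (u!j) \<le> D}) \<le> K * B"
        using sum_bounded_above[of "{..<K}" "\<lambda>j. card {x\<in>A. tdist t x (u!j) \<le> D}" B] ball by simp
      moreover have "card (Near u) \<le> (\<Sum>j<K. card {x\<in>A. tdist t x (u!j) \<le> D})"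
        unfolding Near_def by (rule card_UN_le) simp
      ultimately show ?thesis by linarith
    qed
    then have "card (Sigma T Near) \<le> card T * (K * B)"
      using fin_T fin_Near sum_bounded_above[of T "\<lambda>u. card (Near u)" "K * B"] by simp
    moreover have "card T = card A ^ K" unfolding T_def using \<open>finite A\<close> by (rule card_lists_length_eq)
    ultimately show ?thesis by (simp add: card_cartesian_product)
  qed
  finally show ?thesis unfolding Bad_def .
qed

lemma card_unseparated_tuples_le:
  fixes A :: "nat set"
  assumes "finite A" and ball: "\<And>y. y \<in> A \<Longrightarrow> card {x\<in>A. tdist t x y \<le> D} \<le> B"
  shows "card {u. set u \<subseteq> A \<and> length u = K \<and> \<not> separated D t u} * card A \<le> K^2 * B * card A ^ K"
proof (induction K)
  case 0
  then show ?case by (simp add: separated_def)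
next
  case (Suc K)
  let ?Bad = "\<lambda>K. card {u. set u \<subseteq> A \<and> length u = K \<and> \<not> separated D t u}"
  have "?Bad (Suc K) * card A \<le> (card A * ?Bad K + card A ^ K * (K * B)) * card A"
    using card_unseparated_tuples_Suc_le[OF assms] by (rule mult_le_mono1)
  also have "\<dots> = card A * (?Bad K * card A) + card A ^ Suc K * (K * B)"
    by (simp add: algebra_simps)
  also have "\<dots> \<le> card A * (K^2 * B * card A ^ K) + card A ^ Suc K * (K * B)"
    using Suc.IH by simp
  also have "\<dots> \<le> (Suc K)^2 * B * card A ^ Suc K"
    by (simp add: algebra_simps power2_eq_square)
  finally show ?case .
qed

definition key_tuples :: "nat \<Rightarrow> nat \<Rightarrow> nat list list" where
  "key_tuples n K = List.n_lists K [1..<n+1]"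

lemma length_key_tuples: "length (key_tuples n K) = n^K"
  unfolding key_tuples_def by (simp add: length_n_lists del: upt_Suc)

lemma distinct_key_tuples: "distinct (key_tuples n K)"
  unfolding key_tuples_def by (intro distinct_n_lists) simp

lemma set_key_tuples: "set (key_tuples n K) = {u. set u \<subseteq> {1..n} \<and> length u = K}"
  unfolding key_tuples_def set_n_lists
  by (auto simp del: upt_Suc simp: atLeastLessThanSuc_atLeastAtMost)

lemma key_tuples_nth:
  assumes "b < n^K"
  shows "length (key_tuples n K ! b) = K" "set (key_tuples n K ! b) \<subseteq> {1..n}"
  using nth_mem[of b "key_tuples n K"] assms by (simp_all add: length_key_tuples set_key_tuples)

lemma card_separated_key_tuples_ge:
  assumes "bst_on n t" and "1 \<le> n" and small_balls: "2*(K^2*((D+1)*2^(D+1))) \<le> n"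
  shows "n^K \<le> 2 * card {b\<in>{..<n^K}. separated D t (key_tuples n K ! b)}"
proof -
  define L where "L = key_tuples n K"
  define A where "A = {1..n}"
  have ball: "card {x\<in>A. tdist t x y \<le> D} \<le> (D+1)*2^(D+1)" if "y \<in> A" for y
  proof -
    have "{x\<in>A. tdist t x y \<le> D} = {x \<in> set_tree t. tdist t y x \<le> D}"
      using set_tree_bst_on[OF assms(1)] tdist_commute unfolding A_def by auto
    then show ?thesis using card_tdist_ball_le[OF bst_on_imp_bst[OF assms(1)]] by simp
  qed
  have "2 * card {u \<in> set L. \<not> separated D t u} * n \<le> 2 * (K^2 * ((D+1)*2^(D+1))) * n^K"
    using card_unseparated_tuples_le[of A t D "(D+1)*2^(D+1)" K] ball
    unfolding L_def A_def set_key_tuples by (simp add: conj_ac)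
  also have "\<dots> \<le> n * n^K" using small_balls by (intro mult_le_mono1)
  finally have bad: "2 * card {u \<in> set L. \<not> separated D t u} \<le> n^K"
    using \<open>1 \<le> n\<close> by (simp add: mult.commute)
  have "card (set L) = card {u \<in> set L. separated D t u} + card {u \<in> set L. \<not> separated D t u}"
    by (subst card_Un_disjoint[symmetric]) (auto intro: arg_cong[where f=card])
  moreover have "card (set L) = n^K"
    unfolding L_def using distinct_card[OF distinct_key_tuples] by (simp add: length_key_tuples)
  moreover have "card {b\<in>{..<n^K}. separated D t (L ! b)} = card {u \<in> set L. separated D t u}"
  proof -
    have "bij_betw (\<lambda>b. L ! b) {b\<in>{..<n^K}. separated D t (L ! b)} {u \<in> set L. separated D t u}"
      using distinct_key_tuples unfolding L_def
      by (auto simp: bij_betw_def inj_on_def nth_eq_iff_index_eq length_key_tuples in_set_conv_nth)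
    then show ?thesis by (rule bij_betw_same_card)
  qed
  ultimately show ?thesis using bad unfolding L_def by linarith
qed

definition step_cost :: "nat tree \<Rightarrow> (nat \<Rightarrow> nat) \<Rightarrow> (nat \<Rightarrow> nat) \<Rightarrow> (nat \<Rightarrow> nat) \<Rightarrow> nat \<Rightarrow> nat" where
  "step_cost t s ell f j = 1 + tdist t (s j) (finger_pos s ell f (f j) j)"

lemma mod_neq_if_close:
  fixes a b K :: nat
  assumes "a < b" "b < a + K"
  shows "a mod K \<noteq> b mod K"
proof
  assume "a mod K = b mod K"
  then have "K dvd b - a" using assms mod_eq_dvd_iff_nat[of a b K] by simp
  moreover have "0 < b - a" "b - a < K" using assms by auto
  ultimately show False using nat_dvd_not_less by blast
qed

definition last_use :: "(nat \<Rightarrow> nat) \<Rightarrow> nat \<Rightarrow> nat" where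
  "last_use f j = Max {t'\<in>{1..<j}. f t' = f j}"

lemma last_use:
  assumes "t' \<in> {1..<j}" "f t' = f j"
  shows "t' \<le> last_use f j" "last_use f j < j" "finger_pos s ell f (f j) j = s (last_use f j)"
proof -
  have t': "t' \<in> {t'\<in>{1..<j}. f t' = f j}" using assms by auto
  show "t' \<le> last_use f j" unfolding last_use_def using t' by (intro Max_ge) auto
  have "last_use f j \<in> {t'\<in>{1..<j}. f t' = f j}" unfolding last_use_def using t' by (intro Max_in) auto
  then show "last_use f j < j" by simp
  show "finger_pos s ell f (f j) j = s (last_use f j)" unfolding finger_pos_def last_use_def using t' by auto
qed

text \<open>Over two consecutive rounds of a separated tuple, a request in the second round is
  cheap only if its finger last served the same tuple position; this forces that finger to
  be unused since the same time in the previous round, so each finger serves at most one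
  cheap request, and at least \<open>k\<close> of the \<open>2k\<close> requests cost more than \<open>D\<close>.\<close>
lemma round_cost_ge:
  assumes K: "K = 2*k" and "1 \<le> J"
    and rounds: "\<And>p. p < 2*K \<Longrightarrow> s (J + p) = u ! (p mod K)"
    and "length u = K" and sep: "separated D t u"
    and fingers: "\<And>j. j \<in> {J+K..<J+2*K} \<Longrightarrow> f j \<in> {1..k}"
  shows "k * (D+1) \<le> (\<Sum>j\<in>{J+K..<J+2*K}. step_cost t s ell f j)"
proof -
  define E where "E = {j\<in>{J+K..<J+2*K}.
    (\<exists>t'\<in>{J..<j}. f t' = f j) \<and> (last_use f j - J) mod K \<noteq> (j - J) mod K}"
  have last: "t' \<le> last_use f j" "last_use f j < j" "finger_pos s ell f (f j) j = s (last_use f j)"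
    if "t' \<in> {J..<j}" "f t' = f j" for j t'
    using last_use[of t' j f] that \<open>1 \<le> J\<close> by auto
  have s_at: "s j = u ! ((j - J) mod K)" if "J \<le> j" "j < J + 2*K" for j
    using rounds[of "j - J"] that by simp
  have expensive: "D + 1 \<le> step_cost t s ell f j" if jE: "j \<in> E" for j
  proof -
    obtain t' where t': "t' \<in> {J..<j}" "f t' = f j" and j: "j \<in> {J+K..<J+2*K}"
      and other_pos: "(last_use f j - J) mod K \<noteq> (j - J) mod K"
      using jE unfolding E_def by blast
    have "s j = u ! ((j - J) mod K)" "s (last_use f j) = u ! ((last_use f j - J) mod K)"
      using s_at last[OF t'] t' j by auto
    moreover have "(j - J) mod K < length u" "(last_use f j - J) mod K < length u"
      using j \<open>length u = K\<close> by auto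
    ultimately have "D < tdist t (s j) (s (last_use f j))"
      using sep[unfolded separated_def, rule_format, OF _ _ other_pos[symmetric]] by simp
    then show ?thesis unfolding step_cost_def using last[OF t'] by simp
  qed
  have "inj_on f ({J+K..<J+2*K} - E)"
  proof (rule linorder_inj_onI)
    fix j1 j2 assume j: "j1 < j2" "j1 \<in> {J+K..<J+2*K} - E" "j2 \<in> {J+K..<J+2*K} - E"
    show "f j1 \<noteq> f j2"
    proof
      assume same: "f j1 = f j2"
      have j1: "j1 \<in> {J..<j2}" using j by auto
      have "(last_use f j2 - J) mod K \<noteq> (j2 - J) mod K"
        using last[OF j1 same] j by (intro mod_neq_if_close) auto
      then have "j2 \<in> E" unfolding E_def using j(3) j1 same by blast
      then show False using j(3) by blast
    qed
  qed auto
  then have "card ({J+K..<J+2*K} - E) \<le> card {1..k}"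
    by (rule card_inj_on_le) (use fingers in auto)
  moreover have "card ({J+K..<J+2*K} - E) = 2*k - card E"
    by (subst card_Diff_subset) (auto simp: E_def K)
  ultimately have "k \<le> card E" by simp
  then have "k * (D+1) \<le> card E * (D+1)" by (rule mult_le_mono1)
  also have "\<dots> = (\<Sum>j\<in>E. D + 1)" by simp
  also have "\<dots> \<le> (\<Sum>j\<in>E. step_cost t s ell f j)" by (intro sum_mono expensive)
  also have "\<dots> \<le> (\<Sum>j\<in>{J+K..<J+2*K}. step_cost t s ell f j)"
    by (rule sum_mono2) (auto simp: E_def)
  finally show ?thesis .
qed

text \<open>Positions \<open>b R K + 1, \<dots>, (b + 1) R K\<close> form block \<open>b\<close>: \<open>R\<close> rounds, each listing the
  \<open>b\<close>-th \<open>K\<close>-tuple of keys.\<close>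
definition repeated_tuples :: "nat \<Rightarrow> nat \<Rightarrow> nat \<Rightarrow> nat \<Rightarrow> nat" where
  "repeated_tuples n K R j = key_tuples n K ! ((j - 1) div (R*K)) ! ((j - 1) mod K)"

lemma repeated_tuples_at:
  assumes "\<rho> < R" "p < K"
  shows "repeated_tuples n K R ((b*R+\<rho>)*K + p + 1) = key_tuples n K ! b ! p"
proof -
  have "\<rho>*K + p < (\<rho>+1)*K" using assms(2) by simp
  also have "\<dots> \<le> R*K" using assms(1) by (intro mult_le_mono1) simp
  finally have lt: "\<rho>*K + p < R*K" .
  have eq: "(b*R+\<rho>)*K + p = (\<rho>*K + p) + b*(R*K)" by (simp add: algebra_simps)
  have "R*K \<noteq> 0" using lt by linarith
  then have "((b*R+\<rho>)*K + p) div (R*K) = b" unfolding eq using lt by (simp add: div_mult_self1)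
  moreover have "((b*R+\<rho>)*K + p) mod K = p" by (simp only: mod_mult_self3 mod_less[OF assms(2)])
  ultimately show ?thesis unfolding repeated_tuples_def by simp
qed

lemma block_index_less:
  fixes b \<rho> p :: nat
  assumes "b < N" "\<rho> < R" "p < K"
  shows "(b*R+\<rho>)*K + p < N*R*K"
proof -
  have "b*R+\<rho>+1 \<le> (b+1)*R" using assms(2) by simp
  also have "\<dots> \<le> N*R" using assms(1) by (intro mult_le_mono1) simp
  finally have "(b*R+\<rho>+1)*K \<le> N*R*K" by (rule mult_le_mono1)
  then show ?thesis using assms(3) by (simp add: algebra_simps)
qed

lemma sum_blocks_rounds:
  fixes g :: "nat \<Rightarrow> 'a::comm_monoid_add"
  shows "(\<Sum>i<N*R*K. g i) = (\<Sum>b<N. \<Sum>\<rho><R. \<Sum>p<K. g ((b*R+\<rho>)*K + p))"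
proof -
  have shift: "(\<Sum>i\<in>{a..<a+K'}. h i) = (\<Sum>p<K'. h (a + p))" for a K' and h :: "nat \<Rightarrow> 'a"
    by (simp add: sum.atLeastLessThan_shift_0 atLeast0LessThan comp_def)
  have "(\<Sum>i<N*R*K. g i) = (\<Sum>q<N*R. \<Sum>p<K. g (q*K + p))"
    by (simp flip: sum.nat_group add: shift)
  also have "\<dots> = (\<Sum>b<N. \<Sum>\<rho><R. \<Sum>p<K. g ((b*R+\<rho>)*K + p))"
    by (simp flip: sum.nat_group[where g = "\<lambda>q. \<Sum>p<K. g (q*K + p)"] add: shift)
  finally show ?thesis .
qed

lemma seq_in_repeated_tuples: "seq_in n (n^K*R*K) (repeated_tuples n K R)"
  unfolding seq_in_def
proof
  fix j assume j: "j \<in> {1..n^K*R*K}"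
  then have "(j - 1) div (R*K) < n^K" by (intro less_mult_imp_div_less) (auto simp: mult.assoc)
  moreover have "(j - 1) mod K < K" using j by (cases K) auto
  ultimately show "repeated_tuples n K R j \<in> {1..n}"
    unfolding repeated_tuples_def using key_tuples_nth by (metis nth_mem subsetD)
qed

lemma prev_occ_less: "1 \<le> j \<Longrightarrow> prev_occ s j < j"
proof (cases "\<exists>i\<in>{1..<j}. s i = s j")
  case True
  have "Max {i\<in>{1..<j}. s i = s j} \<in> {i\<in>{1..<j}. s i = s j}" by (rule Max_in) (use True in auto)
  then show ?thesis unfolding prev_occ_def using True by auto
qed (simp add: prev_occ_def)

lemma card_wset_pos: "1 \<le> j \<Longrightarrow> 0 < card (wset s j)"
proof -
  assume "1 \<le> j"
  then have "s j \<in> wset s j" unfolding wset_def using prev_occ_less by blast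
  moreover have "finite (wset s j)"
    by (rule finite_subset[of _ "s ` {1..j}"]) (auto simp: wset_def)
  ultimately show ?thesis by (auto simp: card_gt_0_iff)
qed

lemma card_wset_le_keys:
  assumes "seq_in n m s" "j \<le> m"
  shows "card (wset s j) \<le> n"
proof -
  have "wset s j \<subseteq> {1..n}" using assms unfolding wset_def seq_in_def by auto
  then show ?thesis by (metis card_atLeastAtMost card_mono finite_atLeastAtMost diff_Suc_1)
qed

lemma card_wset_le_period:
  assumes "0 < K" "K < j" "s (j - K) = s j"
  shows "card (wset s j) \<le> K"
proof -
  have "j - K \<in> {i\<in>{1..<j}. s i = s j}" using assms by auto
  then have "j - K \<le> prev_occ s j"
    unfolding prev_occ_def by (auto intro: Max_ge)
  then have "wset s j \<subseteq> s ` {j-K<..j}" unfolding wset_def by auto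
  then have "card (wset s j) \<le> card {j-K<..j}"
    by (meson card_image_le card_mono finite_greaterThanAtMost finite_imageI order_trans)
  then show ?thesis using assms by simp
qed

lemma log_card_wset_repeated_tuples_le:
  assumes "b < n^K" "\<rho> < R" "p < K"
  shows "log 2 (card (wset (repeated_tuples n K R) ((b*R+\<rho>)*K + p + 1)))
    \<le> log 2 K + (if \<rho> = 0 then log 2 n else 0)"
proof -
  define j where "j = (b*R+\<rho>)*K + p + 1"
  have pos: "0 < card (wset (repeated_tuples n K R) j)" unfolding j_def by (intro card_wset_pos) simp
  have "1 \<le> K" using assms(3) by simp
  moreover have "1 \<le> n" using assms(1) \<open>1 \<le> K\<close> by (cases n) (auto simp: power_0_left)
  ultimately have logs: "0 \<le> log 2 K" "0 \<le> log 2 n" by simp_all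
  show ?thesis
  proof (cases "\<rho> = 0")
    case True
    have "j \<le> n^K*R*K" unfolding j_def using block_index_less[OF assms] by simp
    then have "card (wset (repeated_tuples n K R) j) \<le> n"
      by (intro card_wset_le_keys[OF seq_in_repeated_tuples])
    then have "log 2 (card (wset (repeated_tuples n K R) j)) \<le> log 2 n"
      using pos by (intro log_mono) auto
    then show ?thesis using True logs unfolding j_def by simp
  next
    case False
    then obtain \<rho>' where \<rho>: "\<rho> = Suc \<rho>'" by (cases \<rho>) auto
    have "j - K = (b*R+\<rho>')*K + p + 1" unfolding j_def \<rho> by (simp add: algebra_simps)
    then have "repeated_tuples n K R (j - K) = key_tuples n K ! b ! p"
      using repeated_tuples_at[of \<rho>' R p K n b] assms \<rho> by simp
    moreover have "repeated_tuples n K R j = key_tuples n K ! b ! p"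
      unfolding j_def using repeated_tuples_at assms by simp
    ultimately have "repeated_tuples n K R (j - K) = repeated_tuples n K R j" by simp
    moreover have "K < j" unfolding j_def \<rho> by (simp add: algebra_simps)
    ultimately have "card (wset (repeated_tuples n K R) j) \<le> K"
      using assms(3) by (intro card_wset_le_period) auto
    then have "log 2 (card (wset (repeated_tuples n K R) j)) \<le> log 2 K"
      using pos by (intro log_mono) auto
    then show ?thesis using False unfolding j_def by simp
  qed
qed

lemma WS_repeated_tuples_le:
  assumes "1 \<le> R"
  shows "WS (n^K*R*K) (repeated_tuples n K R) \<le> real (n^K*R*K) * log 2 K + real (n^K*K) * log 2 n"
proof -
  define g where "g j = log 2 (card (wset (repeated_tuples n K R) j))" for j
  have "WS (n^K*R*K) (repeated_tuples n K R) = (\<Sum>i<n^K*R*K. g (i+1))"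
    unfolding WS_def g_def by (simp add: sum.atLeast1_atMost_eq)
  also have "\<dots> = (\<Sum>b<n^K. \<Sum>\<rho><R. \<Sum>p<K. g ((b*R+\<rho>)*K + p + 1))"
    by (rule sum_blocks_rounds)
  also have "\<dots> \<le> (\<Sum>b<n^K. \<Sum>\<rho><R. \<Sum>p<K. log 2 K + (if \<rho> = 0 then log 2 n else 0))"
    unfolding g_def by (intro sum_mono log_card_wset_repeated_tuples_le) auto
  also have "\<dots> = (\<Sum>b<n^K. real R * (real K * log 2 K) + real K * log 2 n)"
    using assms by (simp add: distrib_left sum.distrib flip: sum_distrib_left)
  also have "\<dots> = real (n^K*R*K) * log 2 K + real (n^K*K) * log 2 n"
    by (simp add: algebra_simps)
  finally show ?thesis .
qed

lemma round_of_block_cost_ge: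
  assumes K: "K = 2*k" and b: "b < n^K" and \<rho>: "\<rho> \<in> {1..<R}"
    and sep: "separated D t (key_tuples n K ! b)"
    and fingers: "\<forall>j\<in>{1..n^K*R*K}. f j \<in> {1..k}"
  shows "k * (D+1) \<le> (\<Sum>p<K. step_cost t (repeated_tuples n K R) ell f ((b*R+\<rho>)*K + p + 1))"
proof -
  define J where "J = (b*R+(\<rho>-1))*K + 1"
  have J_K: "J + K = (b*R+\<rho>)*K + 1" unfolding J_def using \<rho> by (cases \<rho>) (auto simp: algebra_simps)
  have "k * (D+1) \<le> (\<Sum>j\<in>{J+K..<J+2*K}. step_cost t (repeated_tuples n K R) ell f j)"
  proof (rule round_cost_ge[OF K])
    show "1 \<le> J" unfolding J_def by simp
    show "repeated_tuples n K R (J + p) = key_tuples n K ! b ! (p mod K)" if "p < 2*K" for p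
    proof (cases "p < K")
      case True
      have "\<rho> - 1 < R" using \<rho> by auto
      from repeated_tuples_at[OF this True, of n b] show ?thesis unfolding J_def using True by simp
    next
      case False
      then have "J + p = (b*R+\<rho>)*K + (p - K) + 1" "p mod K = p - K"
        using J_K that by (auto simp: le_mod_geq)
      then show ?thesis using repeated_tuples_at[of \<rho> R "p - K" K] \<rho> that by simp
    qed
    show "length (key_tuples n K ! b) = K" using key_tuples_nth(1)[OF b] .
    show "separated D t (key_tuples n K ! b)" by (rule sep)
    show "f j \<in> {1..k}" if "j \<in> {J+K..<J+2*K}" for j
    proof -
      have "(b*R+\<rho>)*K + (j - (J+K)) < n^K*R*K"
        using that \<rho> by (intro block_index_less[OF b]) auto
      then have "j \<in> {1..n^K*R*K}" using that J_K by auto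
      then show ?thesis using fingers by blast
    qed
  qed
  also have "(\<Sum>j\<in>{J+K..<J+2*K}. step_cost t (repeated_tuples n K R) ell f j)
      = (\<Sum>p<K. step_cost t (repeated_tuples n K R) ell f (J + K + p))"
    by (simp add: sum.atLeastLessThan_shift_0 atLeast0LessThan mult_2 comp_def)
  also have "\<dots> = (\<Sum>p<K. step_cost t (repeated_tuples n K R) ell f ((b*R+\<rho>)*K + p + 1))"
    unfolding J_K by (simp add: ac_simps)
  finally show ?thesis .
qed

lemma finger_cost_repeated_tuples_ge:
  assumes K: "K = 2*k" and fingers: "\<forall>j\<in>{1..n^K*R*K}. f j \<in> {1..k}"
  shows "card {b\<in>{..<n^K}. separated D t (key_tuples n K ! b)} * ((R-1)*(k*(D+1)))
    \<le> finger_cost t (n^K*R*K) (repeated_tuples n K R) ell f"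
proof -
  define c where "c j = step_cost t (repeated_tuples n K R) ell f j" for j
  have "card {b\<in>{..<n^K}. separated D t (key_tuples n K ! b)} * ((R-1)*(k*(D+1)))
      = (\<Sum>b<n^K. if separated D t (key_tuples n K ! b) then (R-1)*(k*(D+1)) else 0)"
    by (simp add: sum.If_cases Int_def)
  also have "\<dots> \<le> (\<Sum>b<n^K. \<Sum>\<rho><R. \<Sum>p<K. c ((b*R+\<rho>)*K + p + 1))"
  proof (intro sum_mono)
    fix b assume b: "b \<in> {..<n^K}"
    show "(if separated D t (key_tuples n K ! b) then (R-1)*(k*(D+1)) else 0)
        \<le> (\<Sum>\<rho><R. \<Sum>p<K. c ((b*R+\<rho>)*K + p + 1))"
    proof (cases "separated D t (key_tuples n K ! b)")
      case True
      have "(R-1)*(k*(D+1)) = (\<Sum>\<rho>\<in>{1..<R}. k*(D+1))" by simp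
      also have "\<dots> \<le> (\<Sum>\<rho>\<in>{1..<R}. \<Sum>p<K. c ((b*R+\<rho>)*K + p + 1))"
        unfolding c_def using b True by (intro sum_mono round_of_block_cost_ge[OF K _ _ _ fingers]) auto
      also have "\<dots> \<le> (\<Sum>\<rho><R. \<Sum>p<K. c ((b*R+\<rho>)*K + p + 1))"
        by (rule sum_mono2) auto
      finally show ?thesis using True by simp
    qed simp
  qed
  also have "\<dots> = (\<Sum>i<n^K*R*K. c (i + 1))"
    by (rule sum_blocks_rounds[symmetric])
  also have "\<dots> = finger_cost t (n^K*R*K) (repeated_tuples n K R) ell f"
    unfolding finger_cost_def c_def step_cost_def by (simp add: sum.atLeast1_atMost_eq)
  finally show ?thesis .
qed

lemma LF_attained:
  assumes "1 \<le> k" "1 \<le> n"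
  obtains t ell f where "bst_on n t" "\<forall>j\<in>{1..m}. f j \<in> {1..k}"
    "LF n k m s = finger_cost t m s ell f"
proof -
  have "{LF_T n k t m s | t. bst_on n t} \<noteq> {}" using bst_on_exists by blast
  then have "LF n k m s \<in> {LF_T n k t m s | t. bst_on n t}" unfolding LF_def by (rule Inf_nat_def1)
  then obtain t where t: "bst_on n t" "LF n k m s = LF_T n k t m s" by blast
  let ?costs = "{finger_cost t m s ell f | ell f.
      (\<forall>i\<in>{1..k}. ell i \<in> {1..n}) \<and> (\<forall>j\<in>{1..m}. f j \<in> {1..k})}"
  have "finger_cost t m s (\<lambda>_. 1) (\<lambda>_. 1) \<in> ?costs" using assms by auto
  then have "LF_T n k t m s \<in> ?costs" unfolding LF_T_def by (intro Inf_nat_def1) blast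
  then show ?thesis using that t by auto
qed

lemma LF_repeated_tuples_ge:
  assumes K: "K = 2*k" "1 \<le> k" and "2 \<le> R" "1 \<le> n"
    and small_balls: "2*(K^2*((D+1)*2^(D+1))) \<le> n"
  shows "n^K*R*K*(D+1) \<le> 8 * LF n k (n^K*R*K) (repeated_tuples n K R)"
proof -
  obtain t ell f where t: "bst_on n t" and fingers: "\<forall>j\<in>{1..n^K*R*K}. f j \<in> {1..k}"
    and LF: "LF n k (n^K*R*K) (repeated_tuples n K R) = finger_cost t (n^K*R*K) (repeated_tuples n K R) ell f"
    by (rule LF_attained[OF \<open>1 \<le> k\<close> \<open>1 \<le> n\<close>])
  define good where "good = card {b\<in>{..<n^K}. separated D t (key_tuples n K ! b)}"
  have half_separated: "n^K \<le> 2 * good"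
    unfolding good_def using card_separated_key_tuples_ge[OF t \<open>1 \<le> n\<close> small_balls] .
  have rounds: "R * K \<le> 4 * ((R-1)*k)"
  proof -
    have "2*R \<le> 4*(R-1)" using \<open>2 \<le> R\<close> by simp
    then have "2*R*k \<le> 4*(R-1)*k" by (rule mult_le_mono1)
    then show ?thesis unfolding K by (simp add: ac_simps)
  qed
  have "n^K * (R*K) * (D+1) \<le> (2 * good) * (4 * ((R-1)*k)) * (D+1)"
    using mult_le_mono[OF half_separated rounds] by (rule mult_le_mono1)
  also have "\<dots> = 8 * (good * ((R-1)*(k*(D+1))))" by (simp add: mult_ac del: mult_Suc_right)
  also have "\<dots> \<le> 8 * LF n k (n^K*R*K) (repeated_tuples n K R)"
    unfolding LF good_def using finger_cost_repeated_tuples_ge[OF K(1) fingers] by simp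
  finally show ?thesis by (simp add: mult.assoc)
qed

lemma hard_sequence_exists:
  assumes "2 \<le> k" "2 \<le> n" and small_balls: "2*((2*k)^2*((D+1)*2^(D+1))) \<le> n"
  shows "\<exists>m s. 1 \<le> m \<and> seq_in n m s \<and> WS m s \<le> 3 * real m * log 2 k
    \<and> real m * (real D + 1) \<le> 8 * real (LF n k m s)"
proof (intro exI conjI)
  define K where "K = 2*k"
  define m where "m = n^K*n*K"
  show "1 \<le> m" unfolding m_def K_def using assms by simp
  show "seq_in n m (repeated_tuples n K n)" unfolding m_def by (rule seq_in_repeated_tuples)
  have "m*(D+1) \<le> 8 * LF n k m (repeated_tuples n K n)"
    unfolding m_def using LF_repeated_tuples_ge[OF K_def] small_balls assms unfolding K_def by simp
  then have "real (m*(D+1)) \<le> real (8 * LF n k m (repeated_tuples n K n))" by (rule of_nat_mono)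
  then show "real m * (real D + 1) \<le> 8 * real (LF n k m (repeated_tuples n K n))"
    by (simp add: distrib_left)
  \<comment> \<open>First rounds cost at most \<open>log n \<le> n\<close> per request, i.e. at most \<open>m\<close> in total.\<close>
  have "log 2 n \<le> n"
  proof -
    have "log 2 n < log 2 (2^n)" using assms by (intro log_less) (simp_all add: of_nat_less_two_power)
    then show ?thesis by (simp add: log_pow_cancel)
  qed
  then have first_rounds: "real (n^K*K) * log 2 n \<le> real m"
    unfolding m_def using mult_left_mono[of "log 2 n" n "real (n^K*K)"] by (simp add: ac_simps)
  have "log 2 K = 1 + log 2 k" "1 \<le> log 2 k" unfolding K_def using assms by (simp_all add: log_mult)
  have "WS m (repeated_tuples n K n) \<le> real m * log 2 K + real (n^K*K) * log 2 n"
    unfolding m_def using assms by (intro WS_repeated_tuples_le) simp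
  also have "\<dots> \<le> real m * (1 + log 2 k) + real m"
    using first_rounds by (intro add_mono) (simp_all add: \<open>log 2 K = 1 + log 2 k\<close>)
  also have "\<dots> \<le> real m * (3 * log 2 k)"
    using mult_left_mono[OF \<open>1 \<le> log 2 k\<close>, of "real m"] by (simp add: algebra_simps)
  finally show "WS m (repeated_tuples n K n) \<le> 3 * real m * log 2 k" by simp
qed

lemma log_bounded_by_powr_eventually:
  fixes c d :: real
  assumes "0 < d"
  shows "\<exists>n0::nat. \<forall>n\<ge>n0. c * (log 2 n + 1) \<le> real n powr d"
proof -
  have "eventually (\<lambda>x::real. c * (log 2 x + 1) \<le> x powr d) at_top"
    using assms by real_asymp
  then have "eventually (\<lambda>n::nat. c * (log 2 n + 1) \<le> real n powr d) sequentially"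
    by (rule eventually_compose_filterlim[OF _ filterlim_real_sequentially])
  then show ?thesis by (simp add: eventually_sequentially)
qed

lemma two_power_floor_log_le_powr:
  fixes d x :: real
  assumes "0 \<le> d" "1 \<le> x"
  shows "(2::real) ^ nat \<lfloor>d * log 2 x\<rfloor> \<le> x powr d"
proof -
  have "(2::real) ^ nat \<lfloor>d * log 2 x\<rfloor> = 2 powr real (nat \<lfloor>d * log 2 x\<rfloor>)"
    by (simp add: powr_realpow)
  also have "\<dots> \<le> 2 powr (d * log 2 x)" using assms by (intro powr_mono) auto
  also have "\<dots> = (2 powr (log 2 x)) powr d" by (simp add: powr_powr mult.commute)
  also have "\<dots> = x powr d" using assms by simp
  finally show ?thesis .
qed

lemma exists_separation_radius:
  fixes d C :: real
  assumes "0 < d" "d \<le> 1" "0 < C" "1 \<le> n"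
    and log_le: "16*C^2*(log 2 n + 1) \<le> real n powr d"
    and k: "real k \<le> C * real n powr (1/2 - d)"
  shows "\<exists>D. 2*((2*k)^2*((D+1)*2^(D+1))) \<le> n \<and> d * log 2 n \<le> real D + 1"
proof (intro exI conjI)
  define D where "D = nat \<lfloor>d * log 2 n\<rfloor>"
  have log_n: "0 \<le> log 2 n" using assms by simp
  have D_le: "real D \<le> d * log 2 n" unfolding D_def using assms log_n by simp
  show "d * log 2 n \<le> real D + 1" unfolding D_def using assms log_n by linarith
  have k2: "real k ^ 2 \<le> C^2 * real n powr (1 - 2*d)"
  proof -
    have "real k ^ 2 \<le> (C * real n powr (1/2 - d))^2" using k by (intro power_mono) auto
    also have "\<dots> = C^2 * real n powr (1 - 2*d)"
      using assms by (simp add: power_mult_distrib powr_powr[symmetric] power2_eq_square powr_add[symmetric])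
    finally show ?thesis .
  qed
  have two_pow_D: "(2::real)^D \<le> real n powr d"
    unfolding D_def using assms by (intro two_power_floor_log_le_powr) auto
  have "real D + 1 \<le> log 2 n + 1" using D_le assms log_n mult_right_mono[of d 1 "log 2 n"] by simp
  then have "16 * real k^2 * (real D + 1) * 2^D
      \<le> 16 * (C^2 * real n powr (1 - 2*d)) * (log 2 n + 1) * real n powr d"
    using k2 two_pow_D by (intro mult_mono) auto
  also have "\<dots> = (16*C^2*(log 2 n + 1)) * real n powr (1 - d)"
  proof -
    have pw: "real n powr (1 - 2*d) * real n powr d = real n powr (1 - d)"
      using assms by (simp add: powr_add[symmetric])
    show ?thesis by (simp only: pw[symmetric] mult_ac)
  qed
  also have "\<dots> \<le> real n powr d * real n powr (1 - d)"
    using log_le by (intro mult_right_mono) auto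
  also have "\<dots> = real n" using assms by (simp add: powr_add[symmetric])
  finally have "real (2*((2*k)^2*((D+1)*2^(D+1)))) \<le> real n"
    by (simp add: algebra_simps power2_eq_square)
  then show "2*((2*k)^2*((D+1)*2^(D+1))) \<le> n" by linarith
qed

lemma hard_sequence_for_small_k:
  fixes d C :: real
  assumes "0 < d" "d \<le> 1" "0 < C" "2 \<le> n" "2 \<le> k"
    and log_le: "16*C^2*(log 2 n + 1) \<le> real n powr d"
    and k: "real k \<le> C * real n powr (1/2 - d)"
  shows "\<exists>m s. 1 \<le> m \<and> seq_in n m s \<and> WS m s \<le> 3 * real m * log 2 k
    \<and> d/8 * real m * log 2 (real n / real k) \<le> real (LF n k m s)"
proof -
  obtain D where D: "2*((2*k)^2*((D+1)*2^(D+1))) \<le> n" "d * log 2 n \<le> real D + 1"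
    using exists_separation_radius[OF assms(1-3) _ log_le k] \<open>2 \<le> n\<close> by auto
  obtain m s where ms: "1 \<le> m" "seq_in n m s" "WS m s \<le> 3 * real m * log 2 k"
    and LF: "real m * (real D + 1) \<le> 8 * real (LF n k m s)"
    using hard_sequence_exists[OF \<open>2 \<le> k\<close> \<open>2 \<le> n\<close> D(1)] by auto
  have "log 2 (real n / real k) \<le> log 2 n"
    using assms by (intro log_mono) (auto simp: divide_le_eq)
  then have "d * log 2 (real n / real k) \<le> d * log 2 n"
    using \<open>0 < d\<close> by (intro mult_left_mono) auto
  then have "d * log 2 (real n / real k) \<le> real D + 1" using D(2) by linarith
  then have "real m * (d * log 2 (real n / real k)) \<le> real m * (real D + 1)"
    by (intro mult_left_mono) auto
  with LF have "d/8 * real m * log 2 (real n / real k) \<le> real (LF n k m s)"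
    by (simp add: field_simps)
  with ms show ?thesis by blast
qed

theorem mainTheorem14:
  fixes \<epsilon> C :: real
  assumes "\<epsilon> > 0" and "C > 0"
  shows "\<exists>c1 c2 :: real. c1 > 0 \<and> c2 > 0 \<and> (\<exists>n0::nat. \<forall>n\<ge>n0. \<forall>k::nat.
           2 \<le> k \<and> real k \<le> C * real n powr (1/2 - \<epsilon>) \<longrightarrow>
           (\<exists>(m::nat) (s::nat \<Rightarrow> nat). m \<ge> 1 \<and> seq_in n m s \<and>
              WS m s \<le> c1 * real m * log 2 (real k) \<and>
              real (LF n k m s) \<ge> c2 * real m * log 2 (real n / real k)))"
proof -
  define d where "d = min \<epsilon> 1"
  have d: "0 < d" "d \<le> \<epsilon>" "d \<le> 1" using assms unfolding d_def by auto
  obtain n1 :: nat where n1: "\<forall>n\<ge>n1. 16*C^2*(log 2 n + 1) \<le> real n powr d"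
    using log_bounded_by_powr_eventually[OF d(1)] by blast
  have "\<forall>n\<ge>max n1 2. \<forall>k. 2 \<le> k \<and> real k \<le> C * real n powr (1/2 - \<epsilon>) \<longrightarrow>
      (\<exists>m s. 1 \<le> m \<and> seq_in n m s \<and> WS m s \<le> 3 * real m * log 2 k
        \<and> d/8 * real m * log 2 (real n / real k) \<le> real (LF n k m s))"
  proof (intro allI impI)
    fix n k :: nat assume n: "max n1 2 \<le> n" and k: "2 \<le> k \<and> real k \<le> C * real n powr (1/2 - \<epsilon>)"
    have "real n powr (1/2 - \<epsilon>) \<le> real n powr (1/2 - d)" using n d by (intro powr_mono) auto
    then have "real k \<le> C * real n powr (1/2 - d)"
      using k assms(2) by (meson mult_left_mono less_imp_le order_trans)
    moreover have "2 \<le> n" "16*C^2*(log 2 n + 1) \<le> real n powr d" using n n1 by auto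
    ultimately show "\<exists>m s. 1 \<le> m \<and> seq_in n m s \<and> WS m s \<le> 3 * real m * log 2 k
        \<and> d/8 * real m * log 2 (real n / real k) \<le> real (LF n k m s)"
      using hard_sequence_for_small_k[OF d(1,3) assms(2)] k by blast
  qed
  then show ?thesis
    using d(1) by (intro exI[of _ "3::real"] exI[of _ "d/8"] conjI exI[of _ "max n1 2"]) auto
qed

end
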